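(* Let $N\ge 1$ and $k\ge 1$ be integers, let $q^{(k)}_1,\ldots,q^{(k)}_{N^k}\in\Delta^{N}$ be arbitrary, and let $\mathcal{Q}^{(k)}:=\left(q^{(k)}_1,\ldots,q^{(k)}_{N^k}\right)$. For $i\in\{1,\ldots,N^{k-1}\}$ set $$Q^{(k)}_i:=\left(q^{(k)}_{N(i-1)+1},\,q^{(k)}_{N(i-1)+2},\,\ldots,\,q^{(k)}_{N(i-1)+N}\right)\in\mathbb{R}^{N\times N},$$ and let $$Q^{(k)}:=C_{N,N^{k-1}}\sum_{i=1}^{N^{k-1}}E_{N^{k-1},i}\otimes Q^{(k)}_i\in\mathbb{R}^{N^k\times N^k}$$ be the corresponding $k^{\text{th}}$ order transition matrix. Then $$Q^{(k)}=M^{(k)}_{k}\,C^{(k+1)}_{1}\,B^{(k)}_{k}\left(\mathcal{Q}^{(k)}\right)=C^{(k)}_{1}\,M^{(k)}_{k-1}\,B^{(k)}_{k}\left(\mathcal{Q}^{(k)}\right).$$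
   Context: $\Delta^{n}$ denotes the set of probability vectors in $\mathbb{R}^n$ (column vectors with nonnegative entries summing to $1$). $E_n$ is the $n\times n$ identity matrix, $e_{n,i}$ the $i$-th standard basis column vector of $\mathbb{R}^n$, $E_{n,i}:=e_{n,i}e_{n,i}^{T}$, $\mathbf{1}_n\in\mathbb{R}^n$ the all-ones vector, and $\otimes$ the Kronecker product. The commutation matrix is $C_{n,m}:=\sum_{i=1}^{m}e_{m,i}^{T}\otimes E_n\otimes e_{m,i}$ (an $nm\times nm$ permutation matrix). For integers $k\ge 0$ and $0\le m\le k$ (with $N$ fixed): the marginalization matrix is $M^{(k)}_m:=E_{N^m}\otimes\mathbf{1}_N^{T}\otimes E_{N^{k-m}}\in\mathbb{R}^{N^k\times N^{k+1}}$; for a tuple $\mathcal{Q}=(q_1,\ldots,q_{N^k})$ of vectors in $\Delta^N$, the branching matrix is $B^{(k)}_m(\mathcal{Q}):=\sum_{i=1}^{N^m}\sum_{j=1}^{N^{k-m}}E_{N^m,i}\otimes q_{N^{k-m}(i-1)+j}\otimes E_{N^{k-m},j}\in\mathbb{R}^{N^{k+1}\times N^k}$; the cycling matrix is $C^{(k)}_m:=C_{N^m,N^{k-m}}$. *)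

theory Defs
  imports "Jordan_Normal_Form.Matrix"
begin

text \<open>All indices are 0-based: the paper's index i in {1..n} corresponds to i-1 here.\<close>

definition kron :: "real mat \<Rightarrow> real mat \<Rightarrow> real mat" (infixl "\<otimes>\<^sub>k" 70) where
  "kron A B = mat (dim_row A * dim_row B) (dim_col A * dim_col B)
     (\<lambda>(i,j). A $$ (i div dim_row B, j div dim_col B) * B $$ (i mod dim_row B, j mod dim_col B))"

fun msum :: "nat \<Rightarrow> nat \<Rightarrow> (nat \<Rightarrow> real mat) \<Rightarrow> nat \<Rightarrow> real mat" where
  "msum r c f 0 = 0\<^sub>m r c"
| "msum r c f (Suc n) = msum r c f n + f n"

definition colm :: "real vec \<Rightarrow> real mat" where
  "colm v = mat (dim_vec v) 1 (\<lambda>(i,j). v $ i)"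

definition ebasis :: "nat \<Rightarrow> nat \<Rightarrow> real mat" where
  "ebasis n i = mat n 1 (\<lambda>(r,c). if r = i then 1 else 0)"

definition Eunit :: "nat \<Rightarrow> nat \<Rightarrow> real mat" where
  "Eunit n i = ebasis n i * transpose_mat (ebasis n i)"

definition ones :: "nat \<Rightarrow> real mat" where
  "ones n = mat n 1 (\<lambda>_. 1)"

definition prob_vec :: "nat \<Rightarrow> real vec \<Rightarrow> bool" where
  "prob_vec n v \<longleftrightarrow> dim_vec v = n \<and> (\<forall>j<n. v $ j \<ge> 0) \<and> (\<Sum>j<n. v $ j) = 1"

definition commutation :: "nat \<Rightarrow> nat \<Rightarrow> real mat" where
  "commutation n m = msum (n*m) (n*m)
     (\<lambda>i. transpose_mat (ebasis m i) \<otimes>\<^sub>k 1\<^sub>m n \<otimes>\<^sub>k ebasis m i) m"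

definition marg :: "nat \<Rightarrow> nat \<Rightarrow> nat \<Rightarrow> real mat" where
  "marg N k m = 1\<^sub>m (N^m) \<otimes>\<^sub>k transpose_mat (ones N) \<otimes>\<^sub>k 1\<^sub>m (N^(k-m))"

definition branch :: "nat \<Rightarrow> nat \<Rightarrow> nat \<Rightarrow> (nat \<Rightarrow> real vec) \<Rightarrow> real mat" where
  "branch N k m q = msum (N^(k+1)) (N^k)
     (\<lambda>i. msum (N^(k+1)) (N^k)
        (\<lambda>j. Eunit (N^m) i \<otimes>\<^sub>k colm (q (N^(k-m) * i + j)) \<otimes>\<^sub>k Eunit (N^(k-m)) j) (N^(k-m))) (N^m)"

definition cyc :: "nat \<Rightarrow> nat \<Rightarrow> nat \<Rightarrow> real mat" where
  "cyc N k m = commutation (N^m) (N^(k-m))"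

definition Qblock :: "nat \<Rightarrow> (nat \<Rightarrow> real vec) \<Rightarrow> nat \<Rightarrow> real mat" where
  "Qblock N q i = mat N N (\<lambda>(r,c). q (N * i + c) $ r)"

definition trans_mat_k :: "nat \<Rightarrow> nat \<Rightarrow> (nat \<Rightarrow> real vec) \<Rightarrow> real mat" where
  "trans_mat_k N k q = commutation N (N^(k-1)) *
     msum (N^k) (N^k) (\<lambda>i. Eunit (N^(k-1)) i \<otimes>\<^sub>k Qblock N q i) (N^(k-1))"

end

theory Submission
  imports Defs
begin

text \<open>
  All matrices involved are 0/1 matrices acting on mixed-radix indices below \<open>N^k\<close>: the
  commutation matrix \<open>C\<^sub>n\<^sub>,\<^sub>m\<close> swaps the two digits of an index \<open>i*m + j\<close>, and
  the marginalization matrix sums out one digit. Every identity therefore reduces to div/mod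
  arithmetic on entries, and two facts suffice. First, summing out the new digit of the top-level
  branching matrix \<open>B\<^sub>k(Q)\<close> leaves the block-diagonal matrix \<open>\<Sum>\<^sub>i E\<^sub>i \<otimes> Q\<^sub>i\<close>;
  with the definition of the transition matrix this is the second factorisation. Second,
  \<open>M\<^sub>k C\<^sub>1 = C\<^sub>1 M\<^sub>k\<^sub>-\<^sub>1\<close> holds independently of \<open>Q\<close>, and turns the second
  factorisation into the first.
\<close>

lemma eq_mult_add_iff:
  fixes a x y m :: nat
  assumes "y < m"
  shows "a = x * m + y \<longleftrightarrow> a div m = x \<and> a mod m = y"
proof
  assume "a = x * m + y"
  then show "a div m = x \<and> a mod m = y" using assms by simp
next
  assume "a div m = x \<and> a mod m = y"
  then show "a = x * m + y" using div_mult_mod_eq[of a m] by simp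
qed

lemma mult_add_less_mult:
  fixes x y m p :: nat
  assumes "x < p" and "y < m"
  shows "x * m + y < p * m"
proof -
  have "(x + 1) * m \<le> p * m" using assms(1) by (intro mult_right_mono) simp_all
  then show ?thesis using assms(2) by simp
qed

lemma sum_eq_single:
  fixes g :: "nat \<Rightarrow> 'a::comm_monoid_add"
  assumes "t0 < m" and "\<And>t. t < m \<Longrightarrow> t \<noteq> t0 \<Longrightarrow> g t = 0"
  shows "(\<Sum>t<m. g t) = g t0"
proof -
  have "(\<Sum>t<m. g t) = (\<Sum>t<m. if t = t0 then g t else 0)"
    using assms(2) by (intro sum.cong) auto
  then show ?thesis using assms(1) by simp
qed

lemma index_mult_mat_sum:
  assumes "A \<in> carrier_mat r m" and "B \<in> carrier_mat m c" and "i < r" and "j < c"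
  shows "(A * B) $$ (i,j) = (\<Sum>t<m. A $$ (i,t) * B $$ (t,j))"
  using assms by (simp add: scalar_prod_def atLeast0LessThan)

lemma eq_mat_carrierI:
  assumes "A \<in> carrier_mat r c" and "\<And>i j. i < r \<Longrightarrow> j < c \<Longrightarrow> A $$ (i,j) = f (i,j)"
  shows "A = mat r c f"
  using assms by (auto intro!: eq_matI)

lemma mult_row_selection:
  fixes P A :: "'a::semiring_1 mat"
  assumes P: "P \<in> carrier_mat r m" and A: "A \<in> carrier_mat m c"
    and \<sigma>: "\<And>a. a < r \<Longrightarrow> \<sigma> a < m"
    and P_index: "\<And>a t. a < r \<Longrightarrow> t < m \<Longrightarrow> P $$ (a,t) = (if t = \<sigma> a then 1 else 0)"
  shows "P * A = mat r c (\<lambda>(a,b). A $$ (\<sigma> a, b))"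
proof (rule eq_mat_carrierI)
  show "P * A \<in> carrier_mat r c" using P A by simp
  fix a b assume ab: "a < r" "b < c"
  have "(P * A) $$ (a,b) = (\<Sum>t<m. P $$ (a,t) * A $$ (t,b))"
    using P A ab by (rule index_mult_mat_sum)
  also have "\<dots> = A $$ (\<sigma> a, b)"
    using \<sigma>[OF ab(1)] by (subst sum_eq_single[of "\<sigma> a"]) (auto simp: P_index ab(1))
  finally show "(P * A) $$ (a,b) = (\<lambda>(a,b). A $$ (\<sigma> a, b)) (a,b)" by simp
qed

lemma mult_col_selection:
  fixes P A :: "'a::semiring_1 mat"
  assumes A: "A \<in> carrier_mat r m" and P: "P \<in> carrier_mat m c"
    and \<tau>: "\<And>b. b < c \<Longrightarrow> \<tau> b < m"
    and P_index: "\<And>t b. t < m \<Longrightarrow> b < c \<Longrightarrow> P $$ (t,b) = (if t = \<tau> b then 1 else 0)"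
  shows "A * P = mat r c (\<lambda>(a,b). A $$ (a, \<tau> b))"
proof (rule eq_mat_carrierI)
  show "A * P \<in> carrier_mat r c" using A P by simp
  fix a b assume ab: "a < r" "b < c"
  have "(A * P) $$ (a,b) = (\<Sum>t<m. A $$ (a,t) * P $$ (t,b))"
    using A P ab by (rule index_mult_mat_sum)
  also have "\<dots> = A $$ (a, \<tau> b)"
    using \<tau>[OF ab(2)] by (subst sum_eq_single[of "\<tau> b"]) (auto simp: P_index ab(2))
  finally show "(A * P) $$ (a,b) = (\<lambda>(a,b). A $$ (a, \<tau> b)) (a,b)" by simp
qed

lemma dim_row_kron [simp]: "dim_row (A \<otimes>\<^sub>k B) = dim_row A * dim_row B"
  and dim_col_kron [simp]: "dim_col (A \<otimes>\<^sub>k B) = dim_col A * dim_col B"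
  by (simp_all add: kron_def)

lemma index_kron:
  assumes "i < dim_row A * dim_row B" and "j < dim_col A * dim_col B"
  shows "(A \<otimes>\<^sub>k B) $$ (i,j) =
    A $$ (i div dim_row B, j div dim_col B) * B $$ (i mod dim_row B, j mod dim_col B)"
  using assms by (simp add: kron_def)

lemma msum_carrier:
  "(\<And>t. t < m \<Longrightarrow> f t \<in> carrier_mat r c) \<Longrightarrow> msum r c f m \<in> carrier_mat r c"
  by (induction m) auto

lemma index_msum:
  assumes "\<And>t. t < m \<Longrightarrow> f t \<in> carrier_mat r c" and "i < r" and "j < c"
  shows "msum r c f m $$ (i,j) = (\<Sum>t<m. f t $$ (i,j))"
  using assms(1)
proof (induction m)
  case (Suc m)
  have "f m \<in> carrier_mat r c" using Suc.prems by simp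
  then have "msum r c f (Suc m) $$ (i,j) = msum r c f m $$ (i,j) + f m $$ (i,j)"
    using assms(2,3) by (simp add: carrier_matD)
  then show ?case using Suc by simp
qed (use assms(2,3) in simp)

lemma msum_cong:
  "(\<And>t. t < m \<Longrightarrow> f t = g t) \<Longrightarrow> msum r c f m = msum r c g m"
  by (induction m) auto

lemma msum_1: "f 0 \<in> carrier_mat r c \<Longrightarrow> msum r c f 1 = f 0"
  by (simp add: One_nat_def)

lemma dim_ebasis [simp]: "dim_row (ebasis n i) = n" "dim_col (ebasis n i) = 1"
  by (simp_all add: ebasis_def)

lemma index_ebasis [simp]: "r < n \<Longrightarrow> c < 1 \<Longrightarrow> ebasis n i $$ (r,c) = (if r = i then 1 else 0)"
  by (simp add: ebasis_def)

lemma dim_Eunit [simp]: "dim_row (Eunit n i) = n" "dim_col (Eunit n i) = n"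
  by (simp_all add: Eunit_def)

lemma index_Eunit [simp]:
  "r < n \<Longrightarrow> c < n \<Longrightarrow> Eunit n i $$ (r,c) = (if r = i \<and> c = i then 1 else 0)"
  by (simp add: Eunit_def scalar_prod_def)

lemma dim_ones [simp]: "dim_row (ones n) = n" "dim_col (ones n) = 1"
  by (simp_all add: ones_def)

lemma index_ones [simp]: "i < n \<Longrightarrow> j < 1 \<Longrightarrow> ones n $$ (i,j) = 1"
  by (simp add: ones_def)

lemma dim_colm [simp]: "dim_row (colm v) = dim_vec v" "dim_col (colm v) = 1"
  by (simp_all add: colm_def)

lemma index_colm [simp]: "i < dim_vec v \<Longrightarrow> j < 1 \<Longrightarrow> colm v $$ (i,j) = v $ i"
  by (simp add: colm_def)

lemma kron_Eunit_1: "A \<otimes>\<^sub>k Eunit 1 0 = A"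
  by (rule eq_matI) (simp_all add: index_kron)

lemma commutation_summand_carrier:
  "transpose_mat (ebasis m i) \<otimes>\<^sub>k 1\<^sub>m n \<otimes>\<^sub>k ebasis m i \<in> carrier_mat (n*m) (n*m)"
  unfolding carrier_mat_def by simp

lemma commutation_carrier: "commutation n m \<in> carrier_mat (n*m) (n*m)"
  unfolding commutation_def using commutation_summand_carrier by (rule msum_carrier)

lemma index_commutation:
  assumes ab: "a < n*m" "b < n*m"
  shows "commutation n m $$ (a,b) = (if a mod m = b div n \<and> a div m = b mod n then 1 else 0)"
proof -
  have adm: "a div m < n" using ab(1) by (rule less_mult_imp_div_less)
  have bdn: "b div n < m" using ab(2) by (simp add: less_mult_imp_div_less mult.commute)
  have m: "a mod m < m" using bdn by simp
  have entry: "(transpose_mat (ebasis m i) \<otimes>\<^sub>k 1\<^sub>m n \<otimes>\<^sub>k ebasis m i) $$ (a,b) =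
      (if i = a mod m \<and> b div n = i \<and> a div m = b mod n then 1 else 0)" for i
  proof -
    have "(transpose_mat (ebasis m i) \<otimes>\<^sub>k 1\<^sub>m n \<otimes>\<^sub>k ebasis m i) $$ (a,b) =
        (transpose_mat (ebasis m i) \<otimes>\<^sub>k 1\<^sub>m n) $$ (a div m, b) * ebasis m i $$ (a mod m, 0)"
      using ab by (subst index_kron) (auto simp: mult_ac)
    also have "(transpose_mat (ebasis m i) \<otimes>\<^sub>k 1\<^sub>m n) $$ (a div m, b) =
        transpose_mat (ebasis m i) $$ (0, b div n) * 1\<^sub>m n $$ (a div m, b mod n)"
      using ab adm by (subst index_kron) (auto simp: mult_ac)
    finally show ?thesis using adm bdn m by auto
  qed
  have "commutation n m $$ (a,b) =
      (\<Sum>i<m. (transpose_mat (ebasis m i) \<otimes>\<^sub>k 1\<^sub>m n \<otimes>\<^sub>k ebasis m i) $$ (a,b))"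
    unfolding commutation_def using commutation_summand_carrier ab by (rule index_msum)
  also have "\<dots> = (if a mod m = b div n \<and> a div m = b mod n then 1 else 0)"
    unfolding entry using m by (subst sum_eq_single[of "a mod m"]) auto
  finally show ?thesis .
qed

lemma mult_commutation_left:
  assumes A: "A \<in> carrier_mat (n*m) c"
  shows "commutation n m * A = mat (n*m) c (\<lambda>(a,b). A $$ ((a mod m) * n + a div m, b))"
proof (rule mult_row_selection[OF commutation_carrier A])
  fix a assume a: "a < n*m"
  then have adm: "a div m < n" by (rule less_mult_imp_div_less)
  have "a mod m < m" using a by (cases m) simp_all
  then show "(a mod m) * n + a div m < n*m"
    using adm mult_add_less_mult[of "a mod m" m "a div m" n] by (simp add: mult.commute)
  fix t assume "t < n*m"
  then show "commutation n m $$ (a,t) = (if t = (a mod m) * n + a div m then 1 else 0)"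
    using index_commutation[OF a] eq_mult_add_iff[OF adm, of t "a mod m"] by auto
qed

lemma mult_commutation_right:
  assumes A: "A \<in> carrier_mat r (n*m)"
  shows "A * commutation n m = mat r (n*m) (\<lambda>(a,b). A $$ (a, (b mod n) * m + b div n))"
proof (rule mult_col_selection[OF A commutation_carrier])
  fix b assume b: "b < n*m"
  then have bdn: "b div n < m" by (simp add: less_mult_imp_div_less mult.commute)
  have "b mod n < n" using b by (cases n) simp_all
  then show "(b mod n) * m + b div n < n*m"
    using bdn mult_add_less_mult[of "b mod n" n "b div n" m] by simp
  fix t assume "t < n*m"
  then show "commutation n m $$ (t,b) = (if t = (b mod n) * m + b div n then 1 else 0)"
    using index_commutation[OF _ b, of t] eq_mult_add_iff[OF bdn, of t "b mod n"] by auto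
qed

lemma cyc_carrier:
  assumes "m \<le> k"
  shows "cyc N k m \<in> carrier_mat (N^k) (N^k)"
proof -
  have "N^m * N^(k-m) = N^k" using assms by (metis le_add_diff_inverse power_add)
  then show ?thesis unfolding cyc_def using commutation_carrier by metis
qed

lemma index_marg_kron:
  assumes a: "a < p*s" and b: "b < p*N*s"
  shows "(1\<^sub>m p \<otimes>\<^sub>k transpose_mat (ones N) \<otimes>\<^sub>k 1\<^sub>m s) $$ (a,b) =
    (if a div s = b div s div N \<and> a mod s = b mod s then 1 else 0)"
proof -
  have s: "s > 0" and N: "N > 0" using b by (auto intro: gr0I)
  have ads: "a div s < p" and bds: "b div s < p*N" using a b by (simp_all add: less_mult_imp_div_less)
  then have bdsN: "b div s div N < p" by (simp add: less_mult_imp_div_less)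
  have "(1\<^sub>m p \<otimes>\<^sub>k transpose_mat (ones N) \<otimes>\<^sub>k 1\<^sub>m s) $$ (a,b) =
      (1\<^sub>m p \<otimes>\<^sub>k transpose_mat (ones N)) $$ (a div s, b div s) * 1\<^sub>m s $$ (a mod s, b mod s)"
    using a b by (subst index_kron) simp_all
  also have "(1\<^sub>m p \<otimes>\<^sub>k transpose_mat (ones N)) $$ (a div s, b div s) =
      1\<^sub>m p $$ (a div s, b div s div N) * transpose_mat (ones N) $$ (0, b div s mod N)"
    using ads bds by (subst index_kron) simp_all
  also have "transpose_mat (ones N) $$ (0, b div s mod N) = 1"
    using N by simp
  also have "1\<^sub>m p $$ (a div s, b div s div N) = (if a div s = b div s div N then 1 else 0)"
    using ads bdsN by auto
  also have "1\<^sub>m s $$ (a mod s, b mod s) = (if a mod s = b mod s then 1 else 0)"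
    using s by auto
  finally show ?thesis by simp
qed

lemma marg_kron_carrier: "1\<^sub>m p \<otimes>\<^sub>k transpose_mat (ones N) \<otimes>\<^sub>k 1\<^sub>m s \<in> carrier_mat (p*s) (p*N*s)"
  by (rule carrier_matI) simp_all

lemma marg_carrier:
  assumes "m \<le> k"
  shows "marg N k m \<in> carrier_mat (N^k) (N^(k+1))"
proof -
  have e: "N^m * N^(k-m) = N^k" using assms by (metis le_add_diff_inverse power_add)
  then have "N^m * N * N^(k-m) = N^(k+1)" by (metis mult.commute mult.left_commute power_Suc Suc_eq_plus1)
  then show ?thesis using e unfolding marg_def carrier_mat_def by simp
qed

lemma msum_Eunit_kron:
  assumes A: "\<And>i. i < n \<Longrightarrow> A i \<in> carrier_mat r c"
  shows "msum (n*r) (n*c) (\<lambda>i. Eunit n i \<otimes>\<^sub>k A i) n =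
    mat (n*r) (n*c) (\<lambda>(a,b). if a div r = b div c then A (a div r) $$ (a mod r, b mod c) else 0)"
proof (rule eq_mat_carrierI)
  have carrier: "Eunit n i \<otimes>\<^sub>k A i \<in> carrier_mat (n*r) (n*c)" if "i < n" for i
    using A[OF that] unfolding carrier_mat_def by simp
  then show "msum (n*r) (n*c) (\<lambda>i. Eunit n i \<otimes>\<^sub>k A i) n \<in> carrier_mat (n*r) (n*c)"
    by (rule msum_carrier)
  fix a b assume ab: "a < n*r" "b < n*c"
  then have adr: "a div r < n" and bdc: "b div c < n" by (simp_all add: less_mult_imp_div_less)
  have entry: "(Eunit n i \<otimes>\<^sub>k A i) $$ (a,b) =
      (if i = a div r then if a div r = b div c then A (a div r) $$ (a mod r, b mod c) else 0
       else 0)" if i: "i < n" for i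
  proof -
    have "(Eunit n i \<otimes>\<^sub>k A i) $$ (a,b) = Eunit n i $$ (a div r, b div c) * A i $$ (a mod r, b mod c)"
      using ab A[OF i] by (subst index_kron) auto
    then show ?thesis using adr bdc by auto
  qed
  have "msum (n*r) (n*c) (\<lambda>i. Eunit n i \<otimes>\<^sub>k A i) n $$ (a,b) = (\<Sum>i<n. (Eunit n i \<otimes>\<^sub>k A i) $$ (a,b))"
    using carrier ab by (rule index_msum)
  also have "\<dots> = (if a div r = b div c then A (a div r) $$ (a mod r, b mod c) else 0)"
    using adr by (subst sum_eq_single[of "a div r"]) (simp_all add: entry)
  finally show "msum (n*r) (n*c) (\<lambda>i. Eunit n i \<otimes>\<^sub>k A i) n $$ (a,b) =
      (\<lambda>(a,b). if a div r = b div c then A (a div r) $$ (a mod r, b mod c) else 0) (a,b)"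
    by simp
qed

lemma branch_top_eq:
  assumes q: "\<And>i. i < N^k \<Longrightarrow> dim_vec (q i) = N"
  shows "branch N k k q = mat (N^(k+1)) (N^k) (\<lambda>(x,c). if x div N = c then q c $ (x mod N) else 0)"
proof -
  have carrier: "Eunit (N^k) i \<otimes>\<^sub>k colm (q i) \<in> carrier_mat (N^k*N) (N^k*1)" if "i < N^k" for i
    using q[OF that] unfolding carrier_mat_def by simp
  have rows: "N^(k+1) = N^k*N" by (simp add: mult.commute)
  have single_term: "msum (N^(k+1)) (N^k)
      (\<lambda>j. Eunit (N^k) i \<otimes>\<^sub>k colm (q (N^(k-k)*i + j)) \<otimes>\<^sub>k Eunit (N^(k-k)) j) (N^(k-k))
      = Eunit (N^k) i \<otimes>\<^sub>k colm (q i)" if i: "i < N^k" for i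
    unfolding diff_self_eq_0 power_0 mult.left_neutral
    using carrier[OF i] by (subst msum_1) (simp_all only: kron_Eunit_1 rows mult_1_right add_0_right)
  have "branch N k k q = msum (N^k*N) (N^k*1) (\<lambda>i. Eunit (N^k) i \<otimes>\<^sub>k colm (q i)) (N^k)"
    unfolding branch_def rows[symmetric] mult_1_right by (rule msum_cong) (rule single_term)
  also have "\<dots> = mat (N^k*N) (N^k*1) (\<lambda>(x,c). if x div N = c then q c $ (x mod N) else 0)"
  proof -
    have "x mod N < N" if "x < N^k*N" for x using that by (cases N) simp_all
    then show ?thesis
      using q by (subst msum_Eunit_kron[where A = "\<lambda>i. colm (q i)"]) (auto intro!: eq_matI)
  qed
  finally show ?thesis unfolding rows by simp
qed

lemma marg_kron_mult_branch:
  fixes q :: "nat \<Rightarrow> real vec"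
  shows "(1\<^sub>m n \<otimes>\<^sub>k transpose_mat (ones N) \<otimes>\<^sub>k 1\<^sub>m N) *
      mat (n*N*N) (n*N) (\<lambda>(x,c). if x div N = c then q c $ (x mod N) else 0) =
    mat (n*N) (n*N) (\<lambda>(a,b). if a div N = b div N then q b $ (a mod N) else 0)"
    (is "?M * ?B = _")
proof (rule eq_mat_carrierI)
  have M: "?M \<in> carrier_mat (n*N) (n*N*N)" by (rule marg_kron_carrier)
  have B: "?B \<in> carrier_mat (n*N*N) (n*N)" by (rule mat_carrier)
  from M B show "?M * ?B \<in> carrier_mat (n*N) (n*N)" by (rule mult_carrier_mat)
  fix a c assume ac: "a < n*N" "c < n*N"
  then have N: "N > 0" by (auto intro: gr0I)
  define x0 where "x0 = c*N + a mod N"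
  have x0: "x0 < n*N*N" unfolding x0_def using ac N by (simp add: mult_add_less_mult)
  have x0_div: "x0 div N = c" and x0_mod: "x0 mod N = a mod N" unfolding x0_def using N by simp_all
  have "(?M * ?B) $$ (a,c) = (\<Sum>x<n*N*N. ?M $$ (a,x) * ?B $$ (x,c))"
    using M B ac by (rule index_mult_mat_sum)
  also have "\<dots> = ?M $$ (a,x0) * ?B $$ (x0,c)"
  proof (rule sum_eq_single[OF x0])
    fix x assume x: "x < n*N*N" "x \<noteq> x0"
    have "x div N \<noteq> c \<or> x mod N \<noteq> a mod N"
      using x(2) unfolding x0_def by (metis div_mult_mod_eq)
    then show "?M $$ (a,x) * ?B $$ (x,c) = 0"
      using ac x(1) by (auto simp: index_marg_kron)
  qed
  also have "\<dots> = (\<lambda>(a,b). if a div N = b div N then q b $ (a mod N) else 0) (a,c)"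
    using ac x0 by (simp add: index_marg_kron x0_div x0_mod)
  finally show "(?M * ?B) $$ (a,c) = (\<lambda>(a,b). if a div N = b div N then q b $ (a mod N) else 0) (a,c)" .
qed

lemma marg_branch_eq_block_diag:
  assumes k: "k \<ge> 1" and q: "\<And>i. i < N^k \<Longrightarrow> dim_vec (q i) = N"
  shows "marg N k (k-1) * branch N k k q =
    msum (N^k) (N^k) (\<lambda>i. Eunit (N^(k-1)) i \<otimes>\<^sub>k Qblock N q i) (N^(k-1))"
proof -
  define n where "n = N^(k-1)"
  have Nk: "N^k = n*N" using k unfolding n_def by (cases k) (simp_all add: mult.commute)
  then have Nk1: "N^(k+1) = n*N*N" by simp
  have marg: "marg N k (k-1) = 1\<^sub>m n \<otimes>\<^sub>k transpose_mat (ones N) \<otimes>\<^sub>k 1\<^sub>m N"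
    using k unfolding marg_def n_def by simp
  have branch: "branch N k k q = mat (n*N*N) (n*N) (\<lambda>(x,c). if x div N = c then q c $ (x mod N) else 0)"
  proof -
    have "branch N k k q = mat (N^(k+1)) (N^k) (\<lambda>(x,c). if x div N = c then q c $ (x mod N) else 0)"
      using q by (rule branch_top_eq)
    then show ?thesis unfolding Nk1 Nk .
  qed
  have block_diag: "msum (N^k) (N^k) (\<lambda>i. Eunit n i \<otimes>\<^sub>k Qblock N q i) n =
      mat (n*N) (n*N) (\<lambda>(a,b). if a div N = b div N then q b $ (a mod N) else 0)"
  proof -
    have "x mod N < N" if "x < n*N" for x using that by (cases N) simp_all
    then show ?thesis unfolding Nk
      by (subst msum_Eunit_kron[where r = N and c = N]) (auto intro!: eq_matI simp: Qblock_def)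
  qed
  show ?thesis unfolding marg branch n_def[symmetric] block_diag by (rule marg_kron_mult_branch)
qed

lemma marg_commutation_index:
  assumes a: "a < N*n" and x: "x < N*(N*n)"
  shows "(1\<^sub>m (N*n) \<otimes>\<^sub>k transpose_mat (ones N) \<otimes>\<^sub>k 1\<^sub>m 1) $$ (a, (x mod N) * (N*n) + x div N) =
    (1\<^sub>m n \<otimes>\<^sub>k transpose_mat (ones N) \<otimes>\<^sub>k 1\<^sub>m N) $$ ((a mod n) * N + a div n, x)"
proof -
  have N: "N > 0" using x by (cases N) simp_all
  have adn: "a div n < N" using a by (rule less_mult_imp_div_less)
  have amn: "a mod n < n" using a by (cases n) simp_all
  have "x < (N*n)*N" using x by (simp add: mult_ac)
  then have xdN: "x div N < N*n" by (rule less_mult_imp_div_less)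
  then have xdNN: "x div N div N < n" by (simp add: less_mult_imp_div_less mult.commute)
  define y where "y = (x mod N) * (N*n) + x div N"
  have y: "y < N*n*N"
    unfolding y_def using mult_add_less_mult[of "x mod N" N "x div N" "N*n"] N xdN
    by (simp add: mult.commute)
  have y_div: "y div N = (x mod N) * n + x div N div N"
  proof -
    have "y = x div N + ((x mod N) * n) * N" unfolding y_def by (simp add: algebra_simps)
    then show ?thesis using N by simp
  qed
  define z where "z = (a mod n) * N + a div n"
  have z: "z < n*N" unfolding z_def using amn adn by (rule mult_add_less_mult)
  have z_div: "z div N = a mod n" and z_mod: "z mod N = a div n"
    unfolding z_def using adn by simp_all
  have "(1\<^sub>m (N*n) \<otimes>\<^sub>k transpose_mat (ones N) \<otimes>\<^sub>k 1\<^sub>m 1) $$ (a, y) =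
      (if a = (x mod N) * n + x div N div N then 1 else 0)"
    using a y by (simp add: index_marg_kron y_div)
  also have "\<dots> = (if a div n = x mod N \<and> a mod n = x div N div N then 1 else 0)"
    using eq_mult_add_iff[OF xdNN, of a "x mod N"] by simp
  also have "\<dots> = (1\<^sub>m n \<otimes>\<^sub>k transpose_mat (ones N) \<otimes>\<^sub>k 1\<^sub>m N) $$ (z, x)"
  proof -
    have "x < n*N*N" using x by (simp add: mult_ac)
    then show ?thesis using z by (auto simp: index_marg_kron z_div z_mod)
  qed
  finally show ?thesis unfolding y_def z_def .
qed

lemma marg_commutation_commute:
  "(1\<^sub>m (N*n) \<otimes>\<^sub>k transpose_mat (ones N) \<otimes>\<^sub>k 1\<^sub>m 1) * commutation N (N*n) =
    commutation N n * (1\<^sub>m n \<otimes>\<^sub>k transpose_mat (ones N) \<otimes>\<^sub>k 1\<^sub>m N)"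
proof -
  have "(1\<^sub>m (N*n) \<otimes>\<^sub>k transpose_mat (ones N) \<otimes>\<^sub>k 1\<^sub>m 1) \<in> carrier_mat (N*n) (N*(N*n))"
    using marg_kron_carrier[of "N*n" N 1] by (simp only: mult_1_right mult.commute[of "N*n" N])
  then have "(1\<^sub>m (N*n) \<otimes>\<^sub>k transpose_mat (ones N) \<otimes>\<^sub>k 1\<^sub>m 1) * commutation N (N*n) =
      mat (N*n) (N*(N*n)) (\<lambda>(a,x).
        (1\<^sub>m (N*n) \<otimes>\<^sub>k transpose_mat (ones N) \<otimes>\<^sub>k 1\<^sub>m 1) $$ (a, (x mod N) * (N*n) + x div N))"
    by (rule mult_commutation_right)
  also have "\<dots> = mat (N*n) (N*(N*n)) (\<lambda>(a,x).
        (1\<^sub>m n \<otimes>\<^sub>k transpose_mat (ones N) \<otimes>\<^sub>k 1\<^sub>m N) $$ ((a mod n) * N + a div n, x))"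
    by (rule cong_mat) (simp_all only: prod.case marg_commutation_index)
  also have "\<dots> = commutation N n * (1\<^sub>m n \<otimes>\<^sub>k transpose_mat (ones N) \<otimes>\<^sub>k 1\<^sub>m N)"
  proof -
    have "(1\<^sub>m n \<otimes>\<^sub>k transpose_mat (ones N) \<otimes>\<^sub>k 1\<^sub>m N) \<in> carrier_mat (N*n) (N*(N*n))"
      using marg_kron_carrier[of n N N] by (simp only: mult.commute[of n N] mult.commute[of "N*n" N])
    then show ?thesis by (rule mult_commutation_left[symmetric])
  qed
  finally show ?thesis .
qed

lemma marg_cyc_commute:
  assumes k: "k \<ge> 1"
  shows "marg N k k * cyc N (k+1) 1 = cyc N k 1 * marg N k (k-1)"
proof -
  define n where "n = N^(k-1)"
  have Nk: "N^k = N*n" using k unfolding n_def by (cases k) simp_all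
  have "cyc N (k+1) 1 = commutation N (N*n)" unfolding cyc_def Nk[symmetric] by simp
  moreover have "cyc N k 1 = commutation N n" unfolding cyc_def n_def by simp
  moreover have "marg N k k = 1\<^sub>m (N*n) \<otimes>\<^sub>k transpose_mat (ones N) \<otimes>\<^sub>k 1\<^sub>m 1"
    unfolding marg_def Nk by simp
  moreover have "marg N k (k-1) = 1\<^sub>m n \<otimes>\<^sub>k transpose_mat (ones N) \<otimes>\<^sub>k 1\<^sub>m N"
    using k unfolding marg_def n_def by simp
  ultimately show ?thesis by (simp only: marg_commutation_commute)
qed

theorem proposition1:
  fixes N k :: nat and q :: "nat \<Rightarrow> real vec"
  assumes "N \<ge> 1" and "k \<ge> 1"
    and "\<forall>i < N^k. prob_vec N (q i)"
  shows "trans_mat_k N k q = marg N k k * cyc N (k+1) 1 * branch N k k q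
       \<and> trans_mat_k N k q = cyc N k 1 * marg N k (k-1) * branch N k k q"
proof -
  have q: "\<And>i. i < N^k \<Longrightarrow> dim_vec (q i) = N"
    using assms(3) by (simp add: prob_vec_def)
  have branch: "branch N k k q \<in> carrier_mat (N^(k+1)) (N^k)"
    using branch_top_eq[where q = q, OF q] by simp
  have "trans_mat_k N k q = cyc N k 1 *
      msum (N^k) (N^k) (\<lambda>i. Eunit (N^(k-1)) i \<otimes>\<^sub>k Qblock N q i) (N^(k-1))"
    unfolding trans_mat_k_def cyc_def by simp
  also have "\<dots> = cyc N k 1 * (marg N k (k-1) * branch N k k q)"
    using q by (simp only: marg_branch_eq_block_diag[OF assms(2)])
  also have "\<dots> = cyc N k 1 * marg N k (k-1) * branch N k k q"
    using cyc_carrier[OF assms(2)] marg_carrier[of "k-1" k N] branch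
    by (intro assoc_mult_mat[symmetric]) simp_all
  finally show ?thesis using marg_cyc_commute[OF assms(2)] by simp
qed

end
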